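(* Let $A$ be a $d\times d$ integer matrix of determinant $\pm1$ with $\mathrm{spec}(A)=\{1\}$, and for $k>0$ let $F^{(k)}=P(\mathrm{im}(A^k-I))\subset\mathbb Z^d$. Then $F^{(k)}=F^{(1)}$ for all $k>0$. Consequently, if $\tau$ is a twisted skew product with group component $\mathbb Z^d$ and twisting matrix $A$, then for all $k>0$ the $k$-th iterate of the Fried quotient of $\tau$ equals the Fried quotient of $\tau^k$: $(\tau_{F^{(1)}})^k=(\tau^k)_{F^{(k)}}$.
   Context: A subgroup $\Gamma\subset\mathbb Z^d$ is pure if $\mathbb Z^d/\Gamma$ is torsion-free; the purification $P(X)$ of a subset $X$ is the smallest pure subgroup containing $X$. Twisted skew product: over a countable state Markov shift $(\Sigma,\sigma)$ (bi-infinite sequences allowed by a $\{0,1\}$ transition matrix on a countable state set, $\sigma$ the left shift), $\tau(s,n)=(\sigma s,An+h(s))$ on $\Sigma\times\mathbb Z^d$ with $h$ depending only on $(s_0,s_1)$; $\tau^k$ is a twisted skew product with twisting matrix $A^k$. For an $A$-invariant subgroup $\Gamma$, $\tau_\Gamma(s,n+\Gamma)=(\sigma s,An+h(s)+\Gamma)$. The Fried quotient of a twisted skew product with twisting $\Psi$ is $\tau_F$ with $F=P(\mathrm{im}(\Psi-\mathrm{id}))$. *)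

theory Defs
  imports "HOL-Analysis.Analysis"
begin

definition mpow :: "int^'n^'n \<Rightarrow> nat \<Rightarrow> int^'n^'n" where
  "mpow A k = (((**) A) ^^ k) (mat 1)"

definition cmat :: "int^'n^'n \<Rightarrow> complex^'n^'n" where
  "cmat A = (\<chi> i j. complex_of_int (A $ i $ j))"

definition spec :: "int^'n^'n \<Rightarrow> complex set" where
  "spec A = {l. det (mat l - cmat A) = 0}"

definition subgrp :: "(int^'n) set \<Rightarrow> bool" where
  "subgrp G \<longleftrightarrow> 0 \<in> G \<and> (\<forall>x\<in>G. \<forall>y\<in>G. x - y \<in> G)"

definition pure :: "(int^'n) set \<Rightarrow> bool" where
  "pure G \<longleftrightarrow> subgrp G \<and> (\<forall>x (m::int). m \<noteq> 0 \<longrightarrow> m *s x \<in> G \<longrightarrow> x \<in> G)"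

definition purification :: "(int^'n) set \<Rightarrow> (int^'n) set" where
  "purification X = \<Inter> {G. pure G \<and> X \<subseteq> G}"

definition fried_group :: "int^'n^'n \<Rightarrow> (int^'n) set" where
  "fried_group B = purification (range (\<lambda>v. (B - mat 1) *v v))"

definition shift :: "(int \<Rightarrow> 'a) \<Rightarrow> (int \<Rightarrow> 'a)" where
  "shift s = (\<lambda>i. s (i + 1))"

definition markov_shift :: "('a \<Rightarrow> 'a \<Rightarrow> bool) \<Rightarrow> (int \<Rightarrow> 'a) set" where
  "markov_shift M = {s. \<forall>i. M (s i) (s (i + 1))}"

definition tsp :: "int^'n^'n \<Rightarrow> ('a \<Rightarrow> 'a \<Rightarrow> int^'n)
    \<Rightarrow> (int \<Rightarrow> 'a) \<times> (int^'n) \<Rightarrow> (int \<Rightarrow> 'a) \<times> (int^'n)" where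
  "tsp A h = (\<lambda>(s, n). (shift s, A *v n + h (s 0) (s 1)))"

definition coset :: "int^'n \<Rightarrow> (int^'n) set \<Rightarrow> (int^'n) set" where
  "coset n G = (\<lambda>g. n + g) ` G"

text \<open>Induced map on \<Sigma> \<times> (Z^d/G) (cosets represented as sets):
  T_G(s, n + G) = (first component of T(s,n), second component of T(s,n) + G).\<close>
definition quot_map :: "((int \<Rightarrow> 'a) \<times> (int^'n) \<Rightarrow> (int \<Rightarrow> 'a) \<times> (int^'n)) \<Rightarrow> (int^'n) set
    \<Rightarrow> (int \<Rightarrow> 'a) \<times> (int^'n) set \<Rightarrow> (int \<Rightarrow> 'a) \<times> (int^'n) set" where
  "quot_map T G = (\<lambda>(s, c). (fst (T (s, SOME x. x \<in> c)),
      {snd (T (s, x)) + g | x g. x \<in> c \<and> g \<in> G}))"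

end

theory Submission
  imports Defs
begin

(* Write N = A - I and U_k = I + A + ... + A^(k-1), so that A^k - I = N U_k
   (geometric factorisation).  If spec A = {1} then det U_k is nonzero: a complex kernel vector
   x of U_k satisfies A^k x = x, and a discrete Fourier transform of its orbit A^j x produces an
   eigenvector of A for some k-th root of unity different from 1.  For any integer matrix N and
   any integer matrix U of nonzero determinant, range (N U) and range N have the same
   purification, because det U * v lies in range U for every v (Cramer's rule) and pure groups
   are closed under division.

   For the dynamical part, the Fried group F of A is pure and A-invariant.  Any map of the form
   (s, x) |-> (t, M x + c) sends the coset n + G to the coset M n + c + G when G is an
   M-invariant subgroup; both tsp A h and its iterates have this affine form (with M = A^k),
   so the k-th iterate of the induced map on cosets of F and the map induced by tsp^k on cosets
   of F^(k) = F agree. *)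

lemma mv_smult: "(M::'a::comm_ring_1^'n^'m) *v (c *s x) = c *s (M *v x)"
  by (simp add: matrix_vector_mult_def vec_eq_iff sum_distrib_left algebra_simps)

lemma matrix_vector_mult_sum_right: "M *v (\<Sum>x\<in>S. f x) = (\<Sum>x\<in>S. M *v f x)"
  by (induction S rule: infinite_finite_induct) (simp_all add: matrix_vector_right_distrib)

lemma matrix_vector_mult_sum_left: "(\<Sum>x\<in>S. f x) *v v = (\<Sum>x\<in>S. f x *v v)"
  by (induction S rule: infinite_finite_induct) (simp_all add: matrix_vector_mult_add_rdistrib)

lemma sum_scalar_mult: "(\<Sum>x\<in>S. c x) *s (v::'a::comm_ring_1^'n) = (\<Sum>x\<in>S. c x *s v)"
  by (induction S rule: infinite_finite_induct) (simp_all add: vector_sadd_rdistrib)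

lemma matrix_sub_rdistrib: "((A::'a::ring_1^'n^'m) - B) ** C = A ** C - B ** C"
  by (simp add: matrix_matrix_mult_def vec_eq_iff sum_subtractf left_diff_distrib)

lemma matrix_sub_ldistrib: "(A::'a::ring_1^'n^'m) ** (B - C) = A ** B - A ** C"
  by (simp add: matrix_matrix_mult_def vec_eq_iff sum_subtractf right_diff_distrib)

section \<open>Subgroups, pure subgroups and purification\<close>

lemma subgrp_0: "subgrp G \<Longrightarrow> 0 \<in> G"
  unfolding subgrp_def by simp

lemma subgrp_diff: "subgrp G \<Longrightarrow> x \<in> G \<Longrightarrow> y \<in> G \<Longrightarrow> x - y \<in> G"
  unfolding subgrp_def by simp

lemma subgrp_add: "subgrp G \<Longrightarrow> x \<in> G \<Longrightarrow> y \<in> G \<Longrightarrow> x + y \<in> G"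
  using subgrp_diff[of G x "0 - y"] subgrp_diff[of G 0 y] subgrp_0[of G] by simp

lemma pure_subgrp: "pure G \<Longrightarrow> subgrp G"
  unfolding pure_def by simp

lemma pure_div: "pure G \<Longrightarrow> m \<noteq> 0 \<Longrightarrow> m *s x \<in> G \<Longrightarrow> x \<in> G"
  unfolding pure_def by simp

text \<open>An intersection of pure subgroups is pure; in particular purifications are pure.\<close>
lemma pure_purification: "pure (purification X)"
proof -
  have "subgrp (purification X)"
    unfolding subgrp_def purification_def
    by (auto intro: subgrp_0 subgrp_diff pure_subgrp)
  moreover have "x \<in> purification X" if "m \<noteq> 0" "m *s x \<in> purification X" for m x
    using that pure_div unfolding purification_def by blast
  ultimately show ?thesis unfolding pure_def by blast
qed

lemma purification_superset: "X \<subseteq> purification X"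
  unfolding purification_def by auto

lemma purification_least: "pure G \<Longrightarrow> X \<subseteq> G \<Longrightarrow> purification X \<subseteq> G"
  unfolding purification_def by auto

lemma pure_fried_group: "pure (fried_group B)"
  unfolding fried_group_def by (rule pure_purification)

lemma pure_preimage:
  assumes "pure G"
  shows "pure {y. (M::int^'n^'m) *v y \<in> G}"
  using subgrp_0[OF pure_subgrp[OF assms]] subgrp_diff[OF pure_subgrp[OF assms]]
    pure_div[OF assms]
  unfolding pure_def subgrp_def by (auto simp: matrix_vector_mult_diff_distrib mv_smult)

section \<open>Integer matrices viewed as complex matrices\<close>

definition cvec :: "int^'n \<Rightarrow> complex^'n" where
  "cvec v = (\<chi> i. complex_of_int (v $ i))"

lemma cvec_inj: "cvec v = cvec w \<Longrightarrow> v = w"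
  by (simp add: cvec_def vec_eq_iff)

lemma cvec_mult: "cvec (M *v v) = cmat M *v cvec v"
  by (simp add: cvec_def cmat_def matrix_vector_mult_def vec_eq_iff)

lemma cvec_smult: "cvec (c *s v) = complex_of_int c *s cvec v"
  by (simp add: cvec_def vec_eq_iff)

lemma cmat_mult: "cmat (M ** N) = cmat M ** cmat N"
  by (simp add: cmat_def matrix_matrix_mult_def vec_eq_iff)

lemma cmat_sum: "cmat (\<Sum>j<(k::nat). f j) = (\<Sum>j<k. cmat (f j))"
  by (induction k) (simp_all add: cmat_def vec_eq_iff)

lemma cmat_one: "cmat (mat 1) = mat 1"
  by (simp add: cmat_def mat_def vec_eq_iff)

lemma det_cmat: "det (cmat M) = complex_of_int (det M)"
  by (simp add: det_def cmat_def of_int_sum of_int_prod)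

text \<open>Cramer's rule over the integers: a nonsingular integer matrix U hits det U * y
  for every integer vector y (the solution is given by integer determinants).\<close>
lemma int_cramer:
  fixes U :: "int^'n^'n"
  assumes "det U \<noteq> 0"
  shows "\<exists>w. U *v w = det U *s y"
proof -
  let ?C = "cmat U"
  have "det ?C \<noteq> 0" using assms by (simp add: det_cmat)
  then obtain Ci where Ci: "?C ** Ci = mat 1"
    unfolding invertible_det_nz[symmetric] invertible_def by blast
  define x where "x = Ci *v cvec y"
  have Cx: "?C *v x = cvec y" using Ci by (simp add: x_def matrix_vector_mul_assoc)
  define W where "W = (\<lambda>kk. (\<chi> i j. if j = kk then y$i else U$i$j) :: int^'n^'n)"
  define w where "w = (\<chi> kk. det (W kk))"
  have "cvec w $ kk = (det ?C *s x) $ kk" for kk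
  proof -
    have "cmat (W kk) = (\<chi> i j. if j = kk then (?C *v x)$i else ?C$i$j)"
      by (subst Cx) (simp add: W_def cmat_def cvec_def vec_eq_iff)
    then have "det (cmat (W kk)) = x$kk * det ?C"
      using cramer_lemma[where A = ?C and k = kk and x = x] by simp
    then show ?thesis by (simp add: cvec_def w_def det_cmat mult.commute)
  qed
  then have "cvec w = det ?C *s x" by (simp add: vec_eq_iff)
  then have "cvec (U *v w) = cvec (det U *s y)"
    by (simp add: cvec_mult cvec_smult Cx det_cmat mv_smult)
  then show ?thesis using cvec_inj by blast
qed

text \<open>Right multiplication by a nonsingular integer matrix does not change the
  purification of the image: the two images agree up to the finite index det U.\<close>
lemma purification_range_nonsingular:
  fixes N :: "int^'n^'m" and U :: "int^'n^'n"
  assumes "det U \<noteq> 0"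
  shows "purification (range (\<lambda>v. N *v (U *v v))) = purification (range (\<lambda>v. N *v v))"
proof (rule subset_antisym)
  let ?P = "purification (range (\<lambda>v. N *v v))"
  let ?Q = "purification (range (\<lambda>v. N *v (U *v v)))"
  have "range (\<lambda>v. N *v (U *v v)) \<subseteq> range (\<lambda>v. N *v v)" by auto
  then have "range (\<lambda>v. N *v (U *v v)) \<subseteq> ?P"
    using purification_superset by (rule order_trans)
  then show "?Q \<subseteq> ?P"
    by (rule purification_least[OF pure_purification])
  have "range (\<lambda>v. N *v v) \<subseteq> ?Q"
  proof
    fix u assume "u \<in> range (\<lambda>v. N *v v)"
    then obtain v where u: "u = N *v v" by blast
    obtain w where w: "U *v w = det U *s v" using int_cramer[OF assms] by blast
    have "N *v (U *v w) \<in> range (\<lambda>v. N *v (U *v v))" by (rule rangeI)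
    then have "N *v (U *v w) \<in> ?Q" using purification_superset by (rule subsetD[rotated])
    then have "det U *s u \<in> ?Q" by (simp add: u w mv_smult)
    then show "u \<in> ?Q" by (rule pure_div[OF pure_purification assms])
  qed
  then show "?P \<subseteq> ?Q"
    by (rule purification_least[OF pure_purification])
qed

lemma mpow_0: "mpow A 0 = mat 1"
  by (simp add: mpow_def)

lemma mpow_Suc: "mpow A (Suc k) = A ** mpow A k"
  by (simp add: mpow_def)

lemma geometric_factorisation: "mpow A k - mat 1 = (A - mat 1) ** (\<Sum>j<k. mpow A j)"
proof (induction k)
  case 0
  then show ?case by (simp add: mpow_0)
next
  case (Suc k)
  have "(A - mat 1) ** (\<Sum>j<Suc k. mpow A j)
      = (A - mat 1) ** (\<Sum>j<k. mpow A j) + (A - mat 1) ** mpow A k"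
    by (simp add: matrix_add_ldistrib)
  also have "\<dots> = mpow A k - mat 1 + (A ** mpow A k - mpow A k)"
    using Suc by (simp add: matrix_sub_rdistrib)
  finally show ?case by (simp add: mpow_Suc)
qed

section \<open>Nonsingularity of the geometric sum\<close>

lemma eigenvector_char_root:
  fixes B :: "complex^'n^'n"
  assumes "B *v z = l *s z" and "z \<noteq> 0"
  shows "det (mat l - B) = 0"
proof (rule ccontr)
  assume "det (mat l - B) \<noteq> 0"
  then obtain C where "C ** (mat l - B) = mat 1"
    using invertible_det_nz invertible_def by blast
  then have ker: "(mat l - B) *v z = 0 \<Longrightarrow> z = 0"
    using matrix_left_invertible_ker by blast
  have "mat l *v z = l *s z"
    by (simp add: vec_eq_iff matrix_vector_mult_def mat_def if_distrib if_distribR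
        cong del: if_weak_cong)
  then have "(mat l - B) *v z = 0"
    using assms(1) by (simp add: matrix_vector_mult_diff_rdistrib)
  then show False using ker assms(2) by blast
qed

definition root_unity :: "nat \<Rightarrow> nat \<Rightarrow> complex" where
  "root_unity k m = exp (2 * of_real pi * \<i> * of_nat m / of_nat k)"

lemma root_unity_power: "root_unity k m ^ e = root_unity k (m * e)"
  unfolding root_unity_def by (simp add: exp_of_nat_mult[symmetric] algebra_simps)

lemma root_unity_order: "k > 0 \<Longrightarrow> root_unity k m ^ k = 1"
  unfolding root_unity_def using complex_root_unity by simp

lemma root_unity_eq_1: "k > 0 \<Longrightarrow> root_unity k m = 1 \<longleftrightarrow> k dvd m"
  unfolding root_unity_def using complex_root_unity_eq_1[of k m] by simp

lemma root_unity_power_sum: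
  assumes "k > 0" and "e < k"
  shows "(\<Sum>m<k. root_unity k m ^ e) = (if e = 0 then of_nat k else 0)"
proof (cases "e = 0")
  case False
  have "root_unity k m ^ e = root_unity k e ^ m" for m
    by (simp add: root_unity_power mult.commute)
  moreover have "root_unity k e \<noteq> 1"
    using root_unity_eq_1[OF assms(1)] False assms(2) nat_dvd_not_less by auto
  ultimately show ?thesis
    using False by (simp add: sum_gp_strict root_unity_order[OF assms(1)])
qed simp

lemma periodic_orbit_eigenvector:
  fixes B :: "complex^'n^'n"
  assumes orbit: "\<And>j. y (Suc j) = B *v y j" and periodic: "y k = y 0" and root: "l ^ k = 1"
  shows "B *v (\<Sum>j<k. l ^ (k - Suc j) *s y j) = l *s (\<Sum>j<k. l ^ (k - Suc j) *s y j)"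
proof -
  have "l *s (\<Sum>j<k. l ^ (k - Suc j) *s y j) - B *v (\<Sum>j<k. l ^ (k - Suc j) *s y j)
      = (\<Sum>j<k. l ^ (k - j) *s y j - l ^ (k - Suc j) *s y (Suc j))"
    unfolding sum_cmul[symmetric] matrix_vector_mult_sum_right sum_subtractf[symmetric]
  proof (rule sum.cong[OF refl])
    fix j assume "j \<in> {..<k}"
    then have "l * l ^ (k - Suc j) = l ^ (k - j)"
      by (metis Suc_diff_Suc lessThan_iff power_Suc)
    then show "l *s (l ^ (k - Suc j) *s y j) - B *v (l ^ (k - Suc j) *s y j)
        = l ^ (k - j) *s y j - l ^ (k - Suc j) *s y (Suc j)"
      by (simp add: orbit mv_smult vector_smult_assoc)
  qed
  also have "\<dots> = l ^ k *s y 0 - y k"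
    using sum_lessThan_telescope'[where f = "\<lambda>j. l ^ (k - j) *s y j"] by simp
  also have "\<dots> = 0"
    using root periodic by simp
  finally show ?thesis by simp
qed

lemma root_unity_twisted_sum:
  assumes "k > 0"
  shows "(\<Sum>m<k. \<Sum>j<k. root_unity k m ^ (k - Suc j) *s y j) = of_nat k *s y (k - 1)"
proof -
  have "(\<Sum>m<k. \<Sum>j<k. root_unity k m ^ (k - Suc j) *s y j)
      = (\<Sum>j<k. (\<Sum>m<k. root_unity k m ^ (k - Suc j)) *s y j)"
    unfolding sum_scalar_mult by (rule sum.swap)
  also have "\<dots> = (\<Sum>j<k. (if j = k - 1 then of_nat k else 0) *s y j)"
    using assms by (intro sum.cong) (auto simp: root_unity_power_sum)
  also have "\<dots> = of_nat k *s y (k - 1)"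
    using assms by (simp add: if_distrib[of "\<lambda>c. c *s _"] cong: if_cong)
  finally show ?thesis .
qed

lemma det_geometric_sum_nonzero:
  fixes A :: "int^'n^'n"
  assumes spec: "spec A = {1}" and k: "k > 0"
  shows "det (\<Sum>j<k. mpow A j) \<noteq> 0"
proof
  let ?B = "cmat A" and ?U = "cmat (\<Sum>j<k. mpow A j)"
  assume "det (\<Sum>j<k. mpow A j) = 0"
  then have "\<not> invertible ?U" by (simp add: det_cmat invertible_det_nz)
  then have "\<not> (\<exists>C. C ** ?U = mat 1)"
    using matrix_left_right_inverse unfolding invertible_def by blast
  then obtain x where x: "x \<noteq> 0" and Ux: "?U *v x = 0"
    using matrix_left_invertible_ker by blast
  define y where "y j = cmat (mpow A j) *v x" for j
  have orbit: "y (Suc j) = ?B *v y j" for j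
    by (simp add: y_def mpow_Suc cmat_mult matrix_vector_mul_assoc)
  have sum_orbit: "(\<Sum>j<k. y j) = 0"
    using Ux by (simp add: y_def cmat_sum matrix_vector_mult_sum_left)
  have "y k - y 0 = ?B *v (\<Sum>j<k. y j) - (\<Sum>j<k. y j)"
    by (simp add: matrix_vector_mult_sum_right orbit[symmetric] sum_subtractf[symmetric]
        sum_lessThan_telescope)
  then have periodic: "y k = y 0" using sum_orbit by simp
  define z where "z l = (\<Sum>j<k. l ^ (k - Suc j) *s y j)" for l
  have "z (root_unity k m) = 0" if "m < k" for m
  proof (cases "m = 0")
    case True
    then show ?thesis using sum_orbit by (simp add: z_def root_unity_def)
  next
    case False
    have "root_unity k m \<noteq> 1"
      using root_unity_eq_1[OF k] False \<open>m < k\<close> nat_dvd_not_less by auto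
    then have "det (mat (root_unity k m) - ?B) \<noteq> 0"
      using spec by (auto simp: spec_def)
    then show ?thesis
      using eigenvector_char_root[OF periodic_orbit_eigenvector[OF orbit periodic
          root_unity_order[OF k]]]
      unfolding z_def by blast
  qed
  then have "of_nat k *s y (k - 1) = 0"
    using root_unity_twisted_sum[OF k, of y] by (simp add: z_def)
  then have "y (k - 1) = 0"
    using k by (simp add: vec_eq_iff)
  then have "y k = 0"
    using k orbit[of "k - 1"] by simp
  then show False
    using periodic x by (simp add: y_def mpow_0 cmat_one)
qed

theorem fried_group_mpow:
  fixes A :: "int^'n^'n"
  assumes "spec A = {1}" and "k > 0"
  shows "fried_group (mpow A k) = fried_group A"
  unfolding fried_group_def geometric_factorisation matrix_vector_mul_assoc[symmetric]
  by (rule purification_range_nonsingular[OF det_geometric_sum_nonzero[OF assms]])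

text \<open>The Fried group of B is B-invariant, since B commutes with B - I.\<close>
lemma fried_group_invariant:
  fixes B :: "int^'n^'n"
  assumes "x \<in> fried_group B"
  shows "B *v x \<in> fried_group B"
proof -
  let ?X = "range (\<lambda>v. (B - mat 1) *v v)"
  have "B *v ((B - mat 1) *v v) = (B - mat 1) *v (B *v v)" for v
    by (simp add: matrix_vector_mul_assoc matrix_sub_rdistrib matrix_sub_ldistrib)
  then have "?X \<subseteq> {y. B *v y \<in> purification ?X}"
    using purification_superset by fastforce
  then have "purification ?X \<subseteq> {y. B *v y \<in> purification ?X}"
    by (rule purification_least[OF pure_preimage[OF pure_purification]])
  then show ?thesis using assms unfolding fried_group_def by blast
qed

lemma fried_group_invariant_mpow:
  "x \<in> fried_group A \<Longrightarrow> mpow A k *v x \<in> fried_group A"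
  by (induction k)
    (simp_all add: mpow_0 mpow_Suc fried_group_invariant matrix_vector_mul_assoc[symmetric])

section \<open>Twisted skew products and their quotients\<close>

lemma tsp_apply: "tsp A h (s, x) = (shift s, A *v x + h (s 0) (s 1))"
  by (simp add: tsp_def)

lemma tsp_iterate_affine:
  "\<exists>c. \<forall>x. (tsp A h ^^ k) (s, x) = ((shift ^^ k) s, mpow A k *v x + c)"
proof (induction k)
  case 0
  then show ?case by (auto simp: mpow_0)
next
  case (Suc k)
  then obtain c where c: "\<And>x. (tsp A h ^^ k) (s, x) = ((shift ^^ k) s, mpow A k *v x + c)"
    by blast
  let ?s = "(shift ^^ k) s"
  have "(tsp A h ^^ Suc k) (s, x)
      = ((shift ^^ Suc k) s, mpow A (Suc k) *v x + (A *v c + h (?s 0) (?s 1)))" for x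
    by (simp add: c tsp_apply mpow_Suc matrix_vector_right_distrib matrix_vector_mul_assoc
        add.assoc)
  then show ?case by blast
qed

lemma quot_map_affine:
  assumes affine: "\<And>x. T (s, x) = (t, M *v x + c)"
    and G: "subgrp G" and inv: "\<And>g. g \<in> G \<Longrightarrow> M *v g \<in> G"
  shows "quot_map T G (s, coset n G) = (t, coset (M *v n + c) G)"
proof -
  have "{M *v x + c + g | x g. x \<in> coset n G \<and> g \<in> G} = coset (M *v n + c) G"
  proof (intro subset_antisym subsetI)
    fix y assume "y \<in> {M *v x + c + g | x g. x \<in> coset n G \<and> g \<in> G}"
    then obtain f g where f: "f \<in> G" and g: "g \<in> G" and y: "y = M *v (n + f) + c + g"
      by (auto simp: coset_def)
    have "y = (M *v n + c) + (M *v f + g)"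
      by (simp add: y matrix_vector_right_distrib algebra_simps)
    moreover have "M *v f + g \<in> G" using subgrp_add[OF G inv[OF f] g] .
    ultimately show "y \<in> coset (M *v n + c) G" by (auto simp: coset_def)
  next
    fix y assume "y \<in> coset (M *v n + c) G"
    then obtain g where g: "g \<in> G" and y: "y = M *v n + c + g" by (auto simp: coset_def)
    have "n \<in> coset n G" using subgrp_0[OF G] by (force simp: coset_def)
    then show "y \<in> {M *v x + c + g | x g. x \<in> coset n G \<and> g \<in> G}" using g y by blast
  qed
  then show ?thesis by (simp add: quot_map_def affine)
qed

lemma quot_map_tsp_iterate:
  assumes G: "subgrp G" and inv: "\<And>g. g \<in> G \<Longrightarrow> A *v g \<in> G"
  shows "(quot_map (tsp A h) G ^^ k) (s, coset n G)
       = ((shift ^^ k) s, coset (snd ((tsp A h ^^ k) (s, n))) G)"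
proof (induction k)
  case 0
  then show ?case by simp
next
  case (Suc k)
  obtain c where c: "\<And>x. (tsp A h ^^ k) (s, x) = ((shift ^^ k) s, mpow A k *v x + c)"
    using tsp_iterate_affine by blast
  let ?s = "(shift ^^ k) s" and ?m = "mpow A k *v n + c"
  have "quot_map (tsp A h) G (?s, coset ?m G)
      = (shift ?s, coset (A *v ?m + h (?s 0) (?s 1)) G)"
    by (rule quot_map_affine[OF tsp_apply G inv])
  then show ?case using Suc by (simp add: c tsp_apply)
qed

theorem mainTheorem12:
  fixes A :: "int^'n^'n" and M :: "'a::countable \<Rightarrow> 'a \<Rightarrow> bool"
    and h :: "'a \<Rightarrow> 'a \<Rightarrow> int^'n"
  assumes "det A = 1 \<or> det A = -1"
    and "spec A = {1}"
  shows "(\<forall>k>0. fried_group (mpow A k) = fried_group A)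
    \<and> (\<forall>k>0. \<forall>s\<in>markov_shift M. \<forall>n.
          (quot_map (tsp A h) (fried_group A) ^^ k) (s, coset n (fried_group A))
        = quot_map (tsp A h ^^ k) (fried_group (mpow A k)) (s, coset n (fried_group (mpow A k))))"
proof (intro conjI allI impI ballI)
  fix k :: nat assume "k > 0"
  then show "fried_group (mpow A k) = fried_group A"
    using fried_group_mpow[OF assms(2)] by blast
next
  fix k :: nat and s n assume "k > 0"
  let ?F = "fried_group A"
  have F_power: "fried_group (mpow A k) = ?F" using fried_group_mpow[OF assms(2) \<open>k > 0\<close>] .
  have F: "subgrp ?F" by (rule pure_subgrp[OF pure_fried_group])
  obtain c where c: "\<And>x. (tsp A h ^^ k) (s, x) = ((shift ^^ k) s, mpow A k *v x + c)"
    using tsp_iterate_affine by blast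
  have "(quot_map (tsp A h) ?F ^^ k) (s, coset n ?F) = ((shift ^^ k) s, coset (mpow A k *v n + c) ?F)"
    by (simp only: quot_map_tsp_iterate[OF F fried_group_invariant] c snd_conv)
  also have "\<dots> = quot_map (tsp A h ^^ k) ?F (s, coset n ?F)"
    by (rule quot_map_affine[OF c F fried_group_invariant_mpow, symmetric])
  finally show "(quot_map (tsp A h) ?F ^^ k) (s, coset n ?F)
      = quot_map (tsp A h ^^ k) (fried_group (mpow A k)) (s, coset n (fried_group (mpow A k)))"
    unfolding F_power .
qed

end
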